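(* Let $\mathfrak g$ be a six-dimensional nilpotent Lie algebra and $\rho\in\Lambda^3\mathfrak g^*$ a closed stable three-form, with dual three-form $\hat\rho$ (for either orientation). (i) If $\mathfrak g$ is one of $(0,0,0,0,e^{12},e^{34})$, $(0,0,0,0,e^{13}+e^{42},e^{14}+e^{23})$, $(0,0,0,0,e^{12},e^{14}+e^{23})$, then $d\hat\rho\in\Lambda^4U$, where $U$ is the four-dimensional kernel of $d:\Lambda^1\mathfrak g^*\to\Lambda^2\mathfrak g^*$. (ii) If $\mathfrak g$ is $(0,0,0,0,0,e^{12}+e^{34})$, then $d\hat\rho\in\Lambda^4U$ with $U=\mathrm{span}\{e^1,e^2,e^3,e^4\}$.
   Context: A nilpotent Lie algebra is specified by a list $(de^1,\dots,de^6)$: there is a basis $e^1,\dots,e^6$ of $\mathfrak g^*$ whose Chevalley–Eilenberg differentials are the listed two-forms ($e^{ij}=e^i\wedge e^j$); e.g. $(0,0,0,0,e^{12},e^{34})$ means $de^1=\dots=de^4=0$, $de^5=e^{12}$, $de^6=e^{34}$; $d$ extends to $\Lambda^\bullet\mathfrak g^*$ as a derivation. A three-form is stable if its ${\rm GL}$-orbit is open. For stable $\rho$ on oriented $\mathfrak g$: $K_\rho(v)=\kappa((v\lrcorner\rho)\wedge\rho)$ ($\kappa:\Lambda^5\cong V\otimes\Lambda^6$ canonical), $\lambda(\rho)=\frac16\mathrm{tr}K_\rho^2$, $\phi(\rho)=\sqrt{|\lambda(\rho)|}$, and $\hat\rho$ is defined by $d\phi_\rho(\beta)=\hat\rho\wedge\beta$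 for all three-forms $\beta$. *)

theory Defs
  imports "HOL-Analysis.Analysis"
begin

text \<open>Exterior algebra of the dual of a 6-dimensional real vector space with basis
 e^1,...,e^6 (indices 1..6).  A (mixed-degree) form is a function assigning to each
 set S of indices the coefficient of the monomial e^S = e^{s1} \<and> ... \<and> e^{sk}
 (s1 < ... < sk).\<close>

type_synonym form = "nat set \<Rightarrow> real"
type_synonym vec = "nat \<Rightarrow> real"

definition idx :: "nat set" where "idx = {1..6}"

definition forms :: "nat \<Rightarrow> form set" where
  "forms k = {\<omega>. \<forall>S. \<omega> S \<noteq> 0 \<longrightarrow> S \<subseteq> idx \<and> card S = k}"

definition mono :: "nat set \<Rightarrow> form" where
  "mono S = (\<lambda>T. if T = S then 1 else 0)"

definition e1 :: "nat \<Rightarrow> form" where "e1 i = mono {i}"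

definition zero_form :: form where "zero_form = (\<lambda>_. 0)"

definition sgn_shuffle :: "nat set \<Rightarrow> nat set \<Rightarrow> real" where
  "sgn_shuffle A B = (-1) ^ card {(i, j). i \<in> A \<and> j \<in> B \<and> j < i}"

definition wedge :: "form \<Rightarrow> form \<Rightarrow> form" where
  "wedge a b = (\<lambda>S. \<Sum>A\<in>Pow S. sgn_shuffle A (S - A) * a A * b (S - A))"

definition e2 :: "nat \<Rightarrow> nat \<Rightarrow> form" where "e2 i j = wedge (e1 i) (e1 j)"

fun wedge_list :: "form list \<Rightarrow> form" where
  "wedge_list [] = mono {}"
| "wedge_list (a # as) = wedge a (wedge_list as)"

definition top_coeff :: "form \<Rightarrow> real" where "top_coeff \<omega> = \<omega> idx"

text \<open>Chevalley--Eilenberg differential determined by the list de i (i = 1..6) of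
 two-forms, extended to all forms as a derivation.\<close>
definition d_mono :: "(nat \<Rightarrow> form) \<Rightarrow> nat set \<Rightarrow> form" where
  "d_mono de S = (\<lambda>T. \<Sum>i\<in>S. (-1) ^ card {j\<in>S. j < i} *
      wedge (mono {j\<in>S. j < i}) (wedge (de i) (mono {j\<in>S. i < j})) T)"

definition CE_d :: "(nat \<Rightarrow> form) \<Rightarrow> form \<Rightarrow> form" where
  "CE_d de \<omega> = (\<lambda>T. \<Sum>S\<in>Pow idx. \<omega> S * d_mono de S T)"

text \<open>Stability: the GL(g)-orbit of the three-form is open in \<Lambda>^3 g^*.
 A matrix A acts on one-forms by e^i \<mapsto> \<Sum>_j A i j e^j, extended multiplicatively.\<close>
definition invertible6 :: "(nat \<Rightarrow> nat \<Rightarrow> real) \<Rightarrow> bool" where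
  "invertible6 A \<longleftrightarrow> (\<exists>B. \<forall>i\<in>idx. \<forall>j\<in>idx.
      (\<Sum>k\<in>idx. A i k * B k j) = (if i = j then 1 else 0) \<and>
      (\<Sum>k\<in>idx. B i k * A k j) = (if i = j then 1 else 0))"

definition act1 :: "(nat \<Rightarrow> nat \<Rightarrow> real) \<Rightarrow> nat \<Rightarrow> form" where
  "act1 A i = (\<lambda>T. \<Sum>j\<in>idx. A i j * e1 j T)"

definition pullback :: "(nat \<Rightarrow> nat \<Rightarrow> real) \<Rightarrow> form \<Rightarrow> form" where
  "pullback A \<omega> = (\<lambda>T. \<Sum>S\<in>Pow idx. \<omega> S *
      wedge_list (map (act1 A) (sorted_list_of_set S)) T)"

definition stable :: "form \<Rightarrow> bool" where
  "stable \<rho> \<longleftrightarrow> \<rho> \<in> forms 3 \<and>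
     openin (top_of_set (forms 3)) {pullback A \<rho> | A. invertible6 A}"

definition interior :: "vec \<Rightarrow> form \<Rightarrow> form" where
  "interior v \<omega> = (\<lambda>S. \<Sum>i\<in>idx - S. v i * (-1) ^ card {j\<in>S. j < i} * \<omega> (insert i S))"

definition basis_vec :: "nat \<Rightarrow> vec" where
  "basis_vec j = (\<lambda>i. if i = j then 1 else 0)"

text \<open>\<kappa> : \<Lambda>^5 \<cong> V \<otimes> \<Lambda>^6, written w.r.t. the volume form e^{123456}:
 \<kappa>(\<omega>) = w \<otimes> e^{123456} with w \<lrcorner> e^{123456} = \<omega>.\<close>
definition kappa :: "form \<Rightarrow> vec" where
  "kappa \<omega> = (\<lambda>i. if i \<in> idx then (-1) ^ (i - 1) * \<omega> (idx - {i}) else 0)"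

definition K_mat :: "form \<Rightarrow> nat \<Rightarrow> nat \<Rightarrow> real" where
  "K_mat \<rho> i j = kappa (wedge (interior (basis_vec j) \<rho>) \<rho>) i"

definition lambda_inv :: "form \<Rightarrow> real" where
  "lambda_inv \<rho> = (1/6) * (\<Sum>i\<in>idx. \<Sum>j\<in>idx. K_mat \<rho> i j * K_mat \<rho> j i)"

text \<open>\<phi>(\<rho>) as a multiple of the volume form; the orientation sign ori \<in> {1,-1}
 indicates whether e^{123456} is positively (ori = 1) or negatively oriented.\<close>
definition phi :: "real \<Rightarrow> form \<Rightarrow> real" where
  "phi ori \<rho> = ori * sqrt \<bar>lambda_inv \<rho>\<bar>"

definition is_hat :: "real \<Rightarrow> form \<Rightarrow> form \<Rightarrow> bool" where
  "is_hat ori \<rho> \<rho>h \<longleftrightarrow> \<rho>h \<in> forms 3 \<and>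
     (\<forall>\<beta>\<in>forms 3. ((\<lambda>t. phi ori (\<lambda>S. \<rho> S + t * \<beta> S)) has_real_derivative
        top_coeff (wedge \<rho>h \<beta>)) (at 0))"

definition lam_sub :: "nat \<Rightarrow> form set \<Rightarrow> form set" where
  "lam_sub k U = {\<omega>. \<exists>(n::nat) c us. (\<forall>m<n. \<forall>l<k. us m l \<in> U) \<and>
      \<omega> = (\<lambda>T. \<Sum>m<n. c m * wedge_list (map (us m) [0..<k]) T)}"

definition ker_d1 :: "(nat \<Rightarrow> form) \<Rightarrow> form set" where
  "ker_d1 de = {\<alpha> \<in> forms 1. CE_d de \<alpha> = zero_form}"

definition U1234 :: "form set" where
  "U1234 = {\<alpha> \<in> forms 1. \<forall>i. \<alpha> {i} \<noteq> 0 \<longrightarrow> i \<le> 4}"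

definition alg_a :: "nat \<Rightarrow> form" where
  "alg_a i = (if i = 5 then e2 1 2 else if i = 6 then e2 3 4 else zero_form)"
definition alg_b :: "nat \<Rightarrow> form" where
  "alg_b i = (if i = 5 then (\<lambda>T. e2 1 3 T + e2 4 2 T)
             else if i = 6 then (\<lambda>T. e2 1 4 T + e2 2 3 T) else zero_form)"
definition alg_c :: "nat \<Rightarrow> form" where
  "alg_c i = (if i = 5 then e2 1 2
             else if i = 6 then (\<lambda>T. e2 1 4 T + e2 2 3 T) else zero_form)"
definition alg_d :: "nat \<Rightarrow> form" where
  "alg_d i = (if i = 6 then (\<lambda>T. e2 1 2 T + e2 3 4 T) else zero_form)"

end

theory Submission
  imports Defs
begin

(* For each of the four Lie algebras, de^1 = ... = de^4 = 0 and de^5, de^6 lie in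
   Lambda^2 U with U = span{e^1,...,e^4}.
   (1) Closedness of rho kills every coefficient of rho on e^{k56}: a suitable coefficient of
       d rho picks up exactly one contribution, namely +-rho_{k56} times a nonzero coefficient of
       de^5 or de^6.  Hence rho has no monomial divisible by e^{56}.
   (2) For such rho, lambda(rho) only depends on the coefficients of rho on monomials containing
       exactly one of e^5, e^6; so phi is constant along the directions e^B, B a 3-subset of
       {1,2,3,4}.  Differentiating, rho-hat /\ e^B = 0, i.e. rho-hat has no e^{56}-monomial either.
   (3) For a three-form without e^{56}-monomials, d maps it to a multiple of e^{1234}, which lies
       in Lambda^4 U as soon as e^1,...,e^4 lie in U. *)

lemma wedge_infinite: "\<not> finite T \<Longrightarrow> wedge a b T = 0"
  by (simp add: wedge_def)

lemma sgn_shuffle_nonzero [simp]: "sgn_shuffle A B \<noteq> 0"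
  by (simp add: sgn_shuffle_def)

lemma wedge_mono_left:
  assumes "finite T"
  shows "wedge (Defs.mono A) b T = (if A \<subseteq> T then sgn_shuffle A (T - A) * b (T - A) else 0)"
proof -
  have "wedge (Defs.mono A) b T = (\<Sum>X\<in>Pow T. if X = A then sgn_shuffle A (T - A) * b (T - A) else 0)"
    unfolding wedge_def Defs.mono_def by (rule sum.cong) auto
  then show ?thesis
    using assms by simp
qed

lemma wedge_mono_right:
  assumes "finite T"
  shows "wedge a (Defs.mono B) T = (if B \<subseteq> T then sgn_shuffle (T - B) B * a (T - B) else 0)"
proof -
  have "wedge a (Defs.mono B) T =
      (\<Sum>X\<in>Pow T. if X = T - B \<and> B \<subseteq> T then sgn_shuffle (T - B) B * a (T - B) else 0)"
    unfolding wedge_def Defs.mono_def by (rule sum.cong) auto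
  then show ?thesis
    using assms by (cases "B \<subseteq> T") simp_all
qed

lemma wedge_mono_mono:
  assumes "A \<inter> B = {}" "finite A" "finite B"
  shows "wedge (Defs.mono A) (\<lambda>T. c * Defs.mono B T) =
    (\<lambda>T. (c * sgn_shuffle A B) * Defs.mono (A \<union> B) T)"
proof
  fix T
  show "wedge (Defs.mono A) (\<lambda>T. c * Defs.mono B T) T = c * sgn_shuffle A B * Defs.mono (A \<union> B) T"
  proof (cases "finite T")
    case False
    then show ?thesis using assms by (auto simp: wedge_infinite Defs.mono_def)
  next
    case True
    have "A \<subseteq> T \<and> T - A = B \<longleftrightarrow> T = A \<union> B" using assms(1) by auto
    then show ?thesis
      unfolding wedge_mono_left[OF True] by (auto simp: Defs.mono_def)
  qed
qed

lemma e2_eval: "e2 a b X = (if X = {a,b} \<and> a \<noteq> b then sgn_shuffle {a} {b} else 0)"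
proof (cases "finite X")
  case False
  then show ?thesis by (auto simp: e2_def wedge_infinite)
next
  case True
  have "a \<in> X \<and> X - {a} = {b} \<longleftrightarrow> X = {a,b} \<and> a \<noteq> b" by auto
  then show ?thesis
    unfolding e2_def e1_def wedge_mono_left[OF True] by (auto simp: Defs.mono_def)
qed

lemma wedge_list_e1:
  assumes "distinct ks"
  shows "\<exists>s. s \<noteq> 0 \<and> wedge_list (map e1 ks) = (\<lambda>T. s * Defs.mono (set ks) T)"
  using assms
proof (induction ks)
  case Nil
  then show ?case by (intro exI[of _ 1]) simp
next
  case (Cons k ks)
  then obtain s where s: "s \<noteq> 0" "wedge_list (map e1 ks) = (\<lambda>T. s * Defs.mono (set ks) T)"
    by auto
  have "wedge_list (map e1 (k # ks)) = (\<lambda>T. (s * sgn_shuffle {k} (set ks)) * Defs.mono (set (k # ks)) T)"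
    using Cons.prems by (simp add: s(2) e1_def wedge_mono_mono)
  then show ?case using s(1) by (intro exI[of _ "s * sgn_shuffle {k} (set ks)"]) simp
qed

lemma d_mono_term:
  fixes i :: nat
  assumes "finite T"
  shows "wedge (Defs.mono {j\<in>S. j < i}) (wedge D (Defs.mono {j\<in>S. i < j})) T =
    (if S - {i} \<subseteq> T then sgn_shuffle {j\<in>S. j < i} (T - {j\<in>S. j < i}) *
       sgn_shuffle (T - {j\<in>S. j < i} - {j\<in>S. i < j}) {j\<in>S. i < j} * D (T - (S - {i})) else 0)"
proof -
  have diff: "T - {j\<in>S. j < i} - {j\<in>S. i < j} = T - (S - {i})" by auto
  have sub: "({j\<in>S. j < i} \<subseteq> T \<and> {j\<in>S. i < j} \<subseteq> T - {j\<in>S. j < i}) \<longleftrightarrow> S - {i} \<subseteq> T"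
    by (auto simp: subset_iff) (metis linorder_neqE_nat)
  show ?thesis
    using assms by (simp add: wedge_mono_left wedge_mono_right diff sub[symmetric])
qed

lemma d_mono_nonzero:
  assumes "d_mono de S T \<noteq> 0"
  shows "\<exists>i\<in>S. S - {i} \<subseteq> T \<and> de i (T - (S - {i})) \<noteq> 0"
proof -
  have "finite T"
  proof (rule ccontr)
    assume "\<not> finite T"
    then have "d_mono de S T = 0" by (simp add: d_mono_def wedge_infinite)
    with assms show False by simp
  qed
  moreover obtain i where "i \<in> S" and
    "(-1) ^ card {j\<in>S. j < i} *
       wedge (Defs.mono {j\<in>S. j < i}) (wedge (de i) (Defs.mono {j\<in>S. i < j})) T \<noteq> (0::real)"
    using assms unfolding d_mono_def by (meson sum.not_neutral_contains_not_neutral)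
  ultimately show ?thesis by (auto simp: d_mono_term split: if_splits)
qed

lemma d_mono_single_contribution:
  assumes fT: "finite T" and fS: "finite S" and i0: "i0 \<in> S"
    and sub: "S - {i0} \<subseteq> T" and nz: "de i0 (T - (S - {i0})) \<noteq> 0"
    and others: "\<And>i. i \<in> S \<Longrightarrow> i \<noteq> i0 \<Longrightarrow> S - {i} \<subseteq> T \<Longrightarrow> de i (T - (S - {i})) = 0"
  shows "d_mono de S T \<noteq> 0"
proof -
  define f where "f i = (-1) ^ card {j\<in>S. j < i} *
    wedge (Defs.mono {j\<in>S. j < i}) (wedge (de i) (Defs.mono {j\<in>S. i < j})) T" for i
  have "(\<Sum>i\<in>S - {i0}. f i) = 0"
    using others fT by (intro sum.neutral) (simp add: f_def d_mono_term)
  then have "d_mono de S T = f i0"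
    by (simp add: d_mono_def f_def[symmetric] sum.remove[OF fS i0])
  then show ?thesis using nz sub fT by (simp add: f_def d_mono_term)
qed

lemma closed_coeff_zero:
  assumes rho: "\<rho> \<in> forms 3" and closed: "CE_d de \<rho> = zero_form"
    and Q: "Q \<subseteq> idx" and q: "q \<in> Q" and fT: "finite T"
    and sub: "Q - {q} \<subseteq> T" and nz: "de q (T - (Q - {q})) \<noteq> 0"
    and unique: "\<And>S i. S \<subseteq> idx \<Longrightarrow> card S = 3 \<Longrightarrow> i \<in> S \<Longrightarrow> S - {i} \<subseteq> T \<Longrightarrow>
                   de i (T - (S - {i})) \<noteq> 0 \<Longrightarrow> S = Q \<and> i = q"
  shows "\<rho> Q = 0"
proof (rule ccontr)
  assume "\<rho> Q \<noteq> 0"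
  then have card_Q: "card Q = 3" using rho by (auto simp: forms_def)
  have fin_idx: "finite idx" by (simp add: idx_def)
  have d_Q: "d_mono de Q T \<noteq> 0"
  proof (rule d_mono_single_contribution[where de = de, OF fT finite_subset[OF Q fin_idx] q sub nz])
    fix i assume "i \<in> Q" "i \<noteq> q" "Q - {i} \<subseteq> T"
    then show "de i (T - (Q - {i})) = 0" using unique[of Q i] Q card_Q by blast
  qed
  have "(\<Sum>S\<in>Pow idx - {Q}. \<rho> S * d_mono de S T) = 0"
  proof (intro sum.neutral ballI)
    fix S assume S: "S \<in> Pow idx - {Q}"
    show "\<rho> S * d_mono de S T = 0"
    proof (rule ccontr)
      assume "\<rho> S * d_mono de S T \<noteq> 0"
      then have "card S = 3" and "d_mono de S T \<noteq> 0" using rho by (auto simp: forms_def)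
      then obtain i where "i \<in> S" "S - {i} \<subseteq> T" "de i (T - (S - {i})) \<noteq> 0"
        using d_mono_nonzero by blast
      then show False using unique[of S i] S \<open>card S = 3\<close> by blast
    qed
  qed
  then have "CE_d de \<rho> T = \<rho> Q * d_mono de Q T"
    using Q fin_idx by (simp add: CE_d_def sum.remove)
  then show False using closed d_Q \<open>\<rho> Q \<noteq> 0\<close> by (simp add: zero_form_def)
qed

lemma idx_explicit: "idx = {1,2,3,4,5,6}"
  by (auto simp: idx_def)

definition d_into_U4 :: "(nat \<Rightarrow> form) \<Rightarrow> bool" where
  "d_into_U4 de \<longleftrightarrow> (\<forall>i X. de i X \<noteq> 0 \<longrightarrow> i \<in> {5,6} \<and> X \<subseteq> {1,2,3,4} \<and> card X = 2)"

definition no_e56 :: "form \<Rightarrow> bool" where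
  "no_e56 \<omega> \<longleftrightarrow> (\<forall>S. 5 \<in> S \<longrightarrow> 6 \<in> S \<longrightarrow> \<omega> S = 0)"

lemma two_subset_of_three:
  assumes "X \<subseteq> {k,a,b}" "card X = 2"
  shows "X = {a,b} \<or> X = {k,a} \<or> X = {k,b}"
proof -
  obtain x y where "X = {x,y}" "x \<noteq> y" using assms(2) by (auto simp: card_2_iff)
  then show ?thesis using assms(1) by auto
qed

(* Step (1) for one coefficient: if de^i contains e^{ab} but neither e^{ka} nor e^{kb}, then
   the coefficient of e^{kabj} in d rho is +-rho_{k56} de^i_{ab}, where {i,j} = {5,6}. *)
lemma closed_kills_coeff:
  assumes de: "d_into_U4 de" and rho: "\<rho> \<in> forms 3" and closed: "CE_d de \<rho> = zero_form"
    and ij: "(i = 5 \<and> j = 6) \<or> (i = 6 \<and> j = (5::nat))"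
    and kab: "distinct [k,a,b]" "{k,a,b} \<subseteq> {1,2,3,4}"
    and nz: "de i {a,b} \<noteq> 0" and zero_ka: "de i {k,a} = 0" and zero_kb: "de i {k,b} = 0"
  shows "\<rho> {k,5,6} = 0"
proof -
  have ij_56: "i \<in> {5,6}" "j \<in> {5,6}" using ij by auto
  have "{1,2,3,4} \<inter> {5,6::nat} = {}" by simp
  then have "i \<notin> {k,a,b}" "j \<notin> {k,a,b}" using ij_56 kab(2) by blast+
  moreover have "i \<noteq> j" "{k,5,6} = {k,i,j}" using ij by auto
  ultimately have fresh: "i \<notin> {k,a,b}" "j \<notin> {k,a,b}" "i \<noteq> j" "{k,5,6} = {k,i,j}"
    by blast+
  have "{1,2,3,4} \<union> {5,6} \<subseteq> idx" by (simp add: idx_explicit)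
  then have kij_idx: "{k,i,j} \<subseteq> idx" using ij_56 kab(2) by blast
  show ?thesis
    unfolding fresh(4)
  proof (rule closed_coeff_zero[OF rho closed, where T = "{k,a,b,j}" and q = i])
    show "{k,i,j} \<subseteq> idx" by (fact kij_idx)
    show "i \<in> {k,i,j}" "{k,i,j} - {i} \<subseteq> {k,a,b,j}" by auto
    show "finite {k,a,b,j}" by simp
    have "{k,a,b,j} - ({k,i,j} - {i}) = {a,b}" using fresh kab(1) by auto
    then show "de i ({k,a,b,j} - ({k,i,j} - {i})) \<noteq> 0" using nz by simp
  next
    fix S l
    assume S: "S - {l} \<subseteq> {k,a,b,j}" "l \<in> S" and nz_l: "de l ({k,a,b,j} - (S - {l})) \<noteq> 0"
    define X where "X = {k,a,b,j} - (S - {l})"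
    have nz_X: "de l X \<noteq> 0" using nz_l by (simp add: X_def)
    then have l: "l \<in> {5,6}" and X: "X \<subseteq> {1,2,3,4}" "card X = 2"
      using de by (auto simp: d_into_U4_def)
    have "j \<notin> X" using X(1) ij by auto
    then have "j \<in> S - {l}" by (auto simp: X_def)
    then have "l = i" using l ij by auto
    have "X \<subseteq> {k,a,b,j}" by (auto simp: X_def)
    then have "X \<subseteq> {k,a,b}" using \<open>j \<notin> X\<close> by auto
    then have "X = {a,b}"
      using two_subset_of_three[OF _ X(2)] nz_X zero_ka zero_kb \<open>l = i\<close> by auto
    then have "S - {l} = {k,j}" using S(1) fresh kab(1) by (auto simp: X_def)
    then show "S = {k,i,j} \<and> l = i" using S(2) \<open>l = i\<close> by auto
  qed
qed

lemma d_into_U4_alg_a: "d_into_U4 alg_a"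
  by (auto simp: d_into_U4_def alg_a_def e2_eval zero_form_def split: if_splits)

lemma d_into_U4_alg_b: "d_into_U4 alg_b"
  by (auto simp: d_into_U4_def alg_b_def e2_eval zero_form_def split: if_splits)

lemma d_into_U4_alg_c: "d_into_U4 alg_c"
  by (auto simp: d_into_U4_def alg_c_def e2_eval zero_form_def split: if_splits)

lemma d_into_U4_alg_d: "d_into_U4 alg_d"
  by (auto simp: d_into_U4_def alg_d_def e2_eval zero_form_def split: if_splits)

lemma no_e56_from_coeffs:
  assumes rho: "\<rho> \<in> forms 3" and coeffs: "\<And>k. k \<in> {1,2,3,4} \<Longrightarrow> \<rho> {k,5,6} = 0"
  shows "no_e56 \<rho>"
  unfolding no_e56_def
proof (intro allI impI)
  fix S :: "nat set" assume S: "5 \<in> S" "6 \<in> S"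
  show "\<rho> S = 0"
  proof (rule ccontr)
    assume "\<rho> S \<noteq> 0"
    then have S_idx: "S \<subseteq> idx" and card_S: "card S = 3" using rho by (auto simp: forms_def)
    then have "finite S" by (auto simp: idx_def intro: finite_subset)
    then have "card (S - {5,6}) = 1" using card_S S by (simp add: card_Diff_subset)
    then obtain k where k: "S - {5,6} = {k}" by (auto simp: card_Suc_eq)
    then have "S = {k,5,6}" using S by auto
    moreover have "k \<in> idx - {5,6}" using k S_idx by auto
    then have "k \<in> {1,2,3,4}" by (auto simp: idx_explicit)
    ultimately show False using coeffs \<open>\<rho> S \<noteq> 0\<close> by auto
  qed
qed

(* Step (1): closed three-forms have no e^{56}-monomial; for each k a pair (a,b) as in
   closed_kills_coeff is read off from the structure equations. *)
lemma closed_alg_a_no_e56: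
  assumes "\<rho> \<in> forms 3" "CE_d alg_a \<rho> = zero_form"
  shows "no_e56 \<rho>"
proof (rule no_e56_from_coeffs[OF assms(1)])
  note kill = closed_kills_coeff[OF d_into_U4_alg_a assms]
  fix k :: nat assume "k \<in> {1,2,3,4}"
  then show "\<rho> {k,5,6} = 0"
    using kill[of 6 5 1 3 4] kill[of 6 5 2 3 4] kill[of 5 6 3 1 2] kill[of 5 6 4 1 2]
    by (auto simp: alg_a_def e2_eval doubleton_eq_iff)
qed

lemma closed_alg_b_no_e56:
  assumes "\<rho> \<in> forms 3" "CE_d alg_b \<rho> = zero_form"
  shows "no_e56 \<rho>"
proof (rule no_e56_from_coeffs[OF assms(1)])
  note kill = closed_kills_coeff[OF d_into_U4_alg_b assms]
  fix k :: nat assume "k \<in> {1,2,3,4}"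
  then show "\<rho> {k,5,6} = 0"
    using kill[of 5 6 1 2 4] kill[of 5 6 2 1 3] kill[of 5 6 3 2 4] kill[of 5 6 4 1 3]
    by (auto simp: alg_b_def e2_eval doubleton_eq_iff)
qed

lemma closed_alg_c_no_e56:
  assumes "\<rho> \<in> forms 3" "CE_d alg_c \<rho> = zero_form"
  shows "no_e56 \<rho>"
proof (rule no_e56_from_coeffs[OF assms(1)])
  note kill = closed_kills_coeff[OF d_into_U4_alg_c assms]
  fix k :: nat assume "k \<in> {1,2,3,4}"
  then show "\<rho> {k,5,6} = 0"
    using kill[of 6 5 1 2 3] kill[of 6 5 2 1 4] kill[of 5 6 3 1 2] kill[of 5 6 4 1 2]
    by (auto simp: alg_c_def e2_eval doubleton_eq_iff)
qed

lemma closed_alg_d_no_e56: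
  assumes "\<rho> \<in> forms 3" "CE_d alg_d \<rho> = zero_form"
  shows "no_e56 \<rho>"
proof (rule no_e56_from_coeffs[OF assms(1)])
  note kill = closed_kills_coeff[OF d_into_U4_alg_d assms]
  fix k :: nat assume "k \<in> {1,2,3,4}"
  then show "\<rho> {k,5,6} = 0"
    using kill[of 6 5 1 3 4] kill[of 6 5 2 3 4] kill[of 6 5 3 1 2] kill[of 6 5 4 1 2]
    by (auto simp: alg_d_def e2_eval doubleton_eq_iff)
qed

lemma interior_basis_vec:
  "Defs.interior (basis_vec j) \<rho> A =
    (if j \<in> idx - A then (-1) ^ card {k\<in>A. k < j} * \<rho> (insert j A) else 0)"
proof -
  have "Defs.interior (basis_vec j) \<rho> A =
      (\<Sum>k\<in>idx - A. if k = j then (-1) ^ card {l\<in>A. l < j} * \<rho> (insert j A) else 0)"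
    unfolding Defs.interior_def basis_vec_def by (rule sum.cong) auto
  then show ?thesis by (simp add: idx_def)
qed

lemma K_mat_expand:
  "K_mat \<rho> i j = (if i \<in> idx then (-1) ^ (i - 1) *
     (\<Sum>A\<in>Pow (idx - {i}). sgn_shuffle A (idx - {i} - A) *
        Defs.interior (basis_vec j) \<rho> A * \<rho> (idx - {i} - A)) else 0)"
  by (simp add: K_mat_def kappa_def wedge_def)

lemma no_e56_zero: "no_e56 \<omega> \<Longrightarrow> 5 \<in> S \<Longrightarrow> 6 \<in> S \<Longrightarrow> \<omega> S = 0"
  by (simp add: no_e56_def)

(* Bookkeeping for K_rho: how the indices 5, 6 distribute over the two factors of
   (e_j -| rho) /\ rho in the coefficient K_rho(i,j). *)
lemma split_56_off_block:
  "i \<in> idx \<Longrightarrow> i \<le> 4 \<Longrightarrow> j \<in> {5,6::nat} \<Longrightarrow> A \<subseteq> idx - {i} \<Longrightarrow> j \<notin> A \<Longrightarrow>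
   {5,6} \<subseteq> insert j A \<or> {5,6} \<subseteq> idx - {i} - A"
  unfolding idx_explicit insert_iff empty_iff by (elim disjE; auto)

lemma split_56_diag_block:
  "i \<in> idx \<Longrightarrow> j \<in> idx \<Longrightarrow> (i \<le> 4 \<longleftrightarrow> j \<le> (4::nat)) \<Longrightarrow> A \<subseteq> idx - {i} \<Longrightarrow> j \<notin> A \<Longrightarrow>
   {5,6} \<subseteq> insert j A \<or> {5,6} \<subseteq> idx - {i} - A \<or>
   ((5 \<in> insert j A) \<noteq> (6 \<in> insert j A) \<and> (5 \<in> idx - {i} - A) \<noteq> (6 \<in> idx - {i} - A))"
  unfolding idx_explicit insert_iff empty_iff by (elim disjE; auto)

lemma K_mat_off_block:
  assumes rho: "no_e56 \<rho>" and i: "i \<in> idx" "i \<le> 4" and j: "j \<in> {5,6}"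
  shows "K_mat \<rho> i j = 0"
proof -
  have "Defs.interior (basis_vec j) \<rho> A * \<rho> (idx - {i} - A) = 0" if A: "A \<subseteq> idx - {i}" for A
  proof (cases "j \<in> A")
    case False
    from split_56_off_block[OF i j A False]
    show ?thesis using no_e56_zero[OF rho, of "insert j A"] no_e56_zero[OF rho, of "idx - {i} - A"]
      by (auto simp: interior_basis_vec)
  qed (simp add: interior_basis_vec)
  then show ?thesis unfolding K_mat_expand by (simp add: mult.assoc sum.neutral)
qed

lemma K_mat_diag_block:
  assumes rho: "no_e56 \<rho>" and sigma: "no_e56 \<sigma>"
    and agree: "\<And>S. (5 \<in> S) \<noteq> (6 \<in> S) \<Longrightarrow> \<rho> S = \<sigma> S"
    and ij: "i \<in> idx" "j \<in> idx" "i \<le> 4 \<longleftrightarrow> j \<le> 4"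
  shows "K_mat \<rho> i j = K_mat \<sigma> i j"
proof -
  have "Defs.interior (basis_vec j) \<rho> A * \<rho> (idx - {i} - A) =
        Defs.interior (basis_vec j) \<sigma> A * \<sigma> (idx - {i} - A)" if A: "A \<subseteq> idx - {i}" for A
  proof (cases "j \<in> A")
    case False
    with split_56_diag_block[OF ij A] consider "{5,6} \<subseteq> insert j A" | "{5,6} \<subseteq> idx - {i} - A"
      | "(5 \<in> insert j A) \<noteq> (6 \<in> insert j A)" "(5 \<in> idx - {i} - A) \<noteq> (6 \<in> idx - {i} - A)"
      by blast
    then show ?thesis
    proof cases
      case 1
      then show ?thesis using no_e56_zero[OF rho] no_e56_zero[OF sigma] by (auto simp: interior_basis_vec)
    next
      case 2
      then show ?thesis using no_e56_zero[OF rho] no_e56_zero[OF sigma] by (auto simp: interior_basis_vec)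
    next
      case 3
      then show ?thesis using agree[of "insert j A"] agree[of "idx - {i} - A"]
        by (auto simp: interior_basis_vec)
    qed
  qed (simp add: interior_basis_vec)
  then have "(\<Sum>A\<in>Pow (idx - {i}). sgn_shuffle A (idx - {i} - A) *
        Defs.interior (basis_vec j) \<rho> A * \<rho> (idx - {i} - A)) =
      (\<Sum>A\<in>Pow (idx - {i}). sgn_shuffle A (idx - {i} - A) *
        Defs.interior (basis_vec j) \<sigma> A * \<sigma> (idx - {i} - A))"
    by (intro sum.cong) (simp_all add: mult.assoc)
  then show ?thesis unfolding K_mat_expand by simp
qed

lemma lambda_inv_mixed_only:
  assumes rho: "no_e56 \<rho>" and sigma: "no_e56 \<sigma>"
    and agree: "\<And>S. (5 \<in> S) \<noteq> (6 \<in> S) \<Longrightarrow> \<rho> S = \<sigma> S"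
  shows "lambda_inv \<rho> = lambda_inv \<sigma>"
proof -
  have "K_mat \<rho> i j * K_mat \<rho> j i = K_mat \<sigma> i j * K_mat \<sigma> j i" if ij: "i \<in> idx" "j \<in> idx" for i j
  proof (cases "i \<le> 4 \<longleftrightarrow> j \<le> 4")
    case True
    then show ?thesis using K_mat_diag_block[OF rho sigma agree] ij by auto
  next
    case False
    then have "(i \<le> 4 \<and> j \<in> {5,6}) \<or> (j \<le> 4 \<and> i \<in> {5,6})" using ij by (auto simp: idx_def)
    then show ?thesis using K_mat_off_block[OF rho] K_mat_off_block[OF sigma] ij by auto
  qed
  then show ?thesis by (simp add: lambda_inv_def cong: sum.cong)
qed

lemma phi_constant_along_U4:
  assumes rho: "no_e56 \<rho>" and B: "B \<subseteq> {1,2,3,4}"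
  shows "phi ori (\<lambda>S. \<rho> S + t * Defs.mono B S) = phi ori \<rho>"
proof -
  have B_zero: "Defs.mono B S = 0" if "5 \<in> S \<or> 6 \<in> S" for S
    using B that by (auto simp: Defs.mono_def)
  have "lambda_inv (\<lambda>S. \<rho> S + t * Defs.mono B S) = lambda_inv \<rho>"
    using rho B_zero by (intro lambda_inv_mixed_only) (auto simp: no_e56_def)
  then show ?thesis by (simp add: phi_def)
qed

lemma hat_no_e56:
  assumes rho: "no_e56 \<rho>" and hat: "is_hat ori \<rho> \<rho>h"
  shows "no_e56 \<rho>h"
  unfolding no_e56_def
proof (intro allI impI)
  fix S :: "nat set" assume S: "5 \<in> S" "6 \<in> S"
  show "\<rho>h S = 0"
  proof (rule ccontr)
    assume nz: "\<rho>h S \<noteq> 0"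
    have fin_idx: "finite idx" by (simp add: idx_def)
    have S_idx: "S \<subseteq> idx" and card_S: "card S = 3"
      using hat nz by (auto simp: is_hat_def forms_def)
    define B where "B = idx - S"
    have B: "B \<subseteq> {1,2,3,4}" using S by (auto simp: B_def idx_explicit)
    have "card B = 3"
      using card_S S_idx fin_idx by (simp add: B_def card_Diff_subset finite_subset idx_def)
    then have "Defs.mono B \<in> forms 3" by (auto simp: forms_def Defs.mono_def B_def)
    then have "((\<lambda>t. phi ori (\<lambda>S. \<rho> S + t * Defs.mono B S)) has_real_derivative
        top_coeff (wedge \<rho>h (Defs.mono B))) (at 0)"
      using hat by (simp add: is_hat_def)
    then have "((\<lambda>t. phi ori \<rho>) has_real_derivative top_coeff (wedge \<rho>h (Defs.mono B))) (at 0)"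
      by (simp add: phi_constant_along_U4[OF rho B])
    then have "top_coeff (wedge \<rho>h (Defs.mono B)) = 0"
      using DERIV_const DERIV_unique by blast
    moreover have "idx - B = S" using S_idx by (auto simp: B_def)
    ultimately show False
      using nz fin_idx by (simp add: top_coeff_def wedge_mono_right B_def)
  qed
qed

lemma CE_d_concentrated:
  assumes de: "d_into_U4 de" and omega: "no_e56 \<omega>" "\<omega> \<in> forms 3" and T: "T \<noteq> {1,2,3,4}"
  shows "CE_d de \<omega> T = 0"
proof (rule ccontr)
  assume "CE_d de \<omega> T \<noteq> 0"
  then obtain S where S: "S \<in> Pow idx" "\<omega> S * d_mono de S T \<noteq> 0"
    unfolding CE_d_def by (meson sum.not_neutral_contains_not_neutral)
  then have "\<omega> S \<noteq> 0" and "d_mono de S T \<noteq> 0" by auto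
  then have card_S: "card S = 3" and not_56: "\<not> (5 \<in> S \<and> 6 \<in> S)"
    using omega by (auto simp: forms_def no_e56_def)
  obtain i where i: "i \<in> S" "S - {i} \<subseteq> T" and nz: "de i (T - (S - {i})) \<noteq> 0"
    using d_mono_nonzero[OF \<open>d_mono de S T \<noteq> 0\<close>] by blast
  define X where "X = T - (S - {i})"
  have i56: "i \<in> {5,6}" and X: "X \<subseteq> {1,2,3,4}" "card X = 2"
    using de nz by (auto simp: d_into_U4_def X_def)
  have fin_S: "finite S" using S(1) by (auto simp: idx_def intro: finite_subset)
  have S_i: "S - {i} \<subseteq> {1,2,3,4}" "card (S - {i}) = 2"
    using S(1) i56 not_56 i(1) card_S fin_S by (auto simp: idx_explicit)
  have T_split: "T = (S - {i}) \<union> X" "(S - {i}) \<inter> X = {}" using i(2) by (auto simp: X_def)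
  then have "T \<subseteq> {1,2,3,4}" using S_i X by blast
  moreover have "card T = 4"
    using T_split S_i X fin_S by (simp add: card_Un_disjoint finite_subset)
  ultimately have "T = {1,2,3,4}" by (intro card_subset_eq) auto
  with T show False by simp
qed

lemma top_monomial_in_lam_sub:
  assumes "distinct ks" "e1 ` set ks \<subseteq> U" "length ks = k"
  shows "(\<lambda>T. c * Defs.mono (set ks) T) \<in> lam_sub k U"
proof -
  obtain s where s: "s \<noteq> 0" "wedge_list (map e1 ks) = (\<lambda>T. s * Defs.mono (set ks) T)"
    using wedge_list_e1[OF assms(1)] by blast
  have "map (\<lambda>l. e1 (ks ! l)) [0..<length ks] = map e1 ks"
    by (rule nth_equalityI) simp_all
  then have eq: "(\<lambda>T. c * Defs.mono (set ks) T) =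
      (\<lambda>T. \<Sum>m<(1::nat). c / s * wedge_list (map (\<lambda>l. e1 (ks ! l)) [0..<length ks]) T)"
    using s by simp
  have in_U: "\<forall>m<(1::nat). \<forall>l<length ks. e1 (ks ! l) \<in> U"
    using assms(2) by auto
  show ?thesis
    unfolding lam_sub_def assms(3)[symmetric]
    by (intro CollectI exI[of _ "1::nat"] exI[of _ "\<lambda>m. c / s"] exI[of _ "\<lambda>m l. e1 (ks ! l)"] conjI)
      (rule in_U eq)+
qed

lemma e1_in_ker_d1:
  assumes de: "d_into_U4 de" and k: "k \<in> {1,2,3,4}"
  shows "e1 k \<in> ker_d1 de"
proof -
  have term_zero: "e1 k S * d_mono de S T = 0" for S T
  proof (rule ccontr)
    assume "e1 k S * d_mono de S T \<noteq> 0"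
    then have "S = {k}" "d_mono de S T \<noteq> 0" by (auto simp: e1_def Defs.mono_def split: if_splits)
    then obtain i where "i \<in> S" "de i (T - (S - {i})) \<noteq> 0" using d_mono_nonzero by blast
    then have "i = k" "i \<in> {5,6}" using de \<open>S = {k}\<close> by (auto simp: d_into_U4_def)
    then show False using k by auto
  qed
  have "CE_d de (e1 k) = zero_form" by (simp only: CE_d_def zero_form_def term_zero sum.neutral_const)
  moreover have "e1 k \<in> forms 1" using k by (auto simp: e1_def forms_def Defs.mono_def idx_def)
  ultimately show ?thesis by (simp add: ker_d1_def)
qed

lemma e1_in_U1234: "k \<in> {1,2,3,4} \<Longrightarrow> e1 k \<in> U1234"
  by (auto simp: U1234_def e1_def forms_def Defs.mono_def idx_def)

lemma d_hat_in_Lambda4: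
  assumes de: "d_into_U4 de" and rho: "no_e56 \<rho>" and hat: "is_hat ori \<rho> \<rho>h"
    and U: "e1 ` {1,2,3,4} \<subseteq> U"
  shows "CE_d de \<rho>h \<in> lam_sub 4 U"
proof -
  have hat_forms: "\<rho>h \<in> forms 3" using hat by (simp add: is_hat_def)
  have "CE_d de \<rho>h = (\<lambda>T. CE_d de \<rho>h {1,2,3,4} * Defs.mono (set [1,2,3,4]) T)"
    using CE_d_concentrated[OF de hat_no_e56[OF rho hat] hat_forms]
    by (auto simp: Defs.mono_def)
  moreover have "(\<lambda>T. CE_d de \<rho>h {1,2,3,4} * Defs.mono (set [1,2,3,4]) T) \<in> lam_sub 4 U"
    using U by (intro top_monomial_in_lam_sub) auto
  ultimately show ?thesis by simp
qed

theorem lemma4p1: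
  shows "(\<forall>de \<in> {alg_a, alg_b, alg_c}. \<forall>\<rho> ori \<rho>h.
            \<rho> \<in> forms 3 \<and> CE_d de \<rho> = zero_form \<and> stable \<rho> \<and>
            ori \<in> {1, -1} \<and> is_hat ori \<rho> \<rho>h
              \<longrightarrow> CE_d de \<rho>h \<in> lam_sub 4 (ker_d1 de))
       \<and> (\<forall>\<rho> ori \<rho>h.
            \<rho> \<in> forms 3 \<and> CE_d alg_d \<rho> = zero_form \<and> stable \<rho> \<and>
            ori \<in> {1, -1} \<and> is_hat ori \<rho> \<rho>h
              \<longrightarrow> CE_d alg_d \<rho>h \<in> lam_sub 4 U1234)"
proof (intro conjI ballI allI impI)
  fix de \<rho> ori \<rho>h
  assume de: "de \<in> {alg_a, alg_b, alg_c}"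
    and h: "\<rho> \<in> forms 3 \<and> CE_d de \<rho> = zero_form \<and> stable \<rho> \<and> ori \<in> {1, -1} \<and> is_hat ori \<rho> \<rho>h"
  have "d_into_U4 de"
    using de d_into_U4_alg_a d_into_U4_alg_b d_into_U4_alg_c by auto
  moreover have "no_e56 \<rho>"
    using de h closed_alg_a_no_e56 closed_alg_b_no_e56 closed_alg_c_no_e56 by auto
  ultimately show "CE_d de \<rho>h \<in> lam_sub 4 (ker_d1 de)"
    using h e1_in_ker_d1 by (intro d_hat_in_Lambda4[where ori = ori]) auto
next
  fix \<rho> ori \<rho>h
  assume h: "\<rho> \<in> forms 3 \<and> CE_d alg_d \<rho> = zero_form \<and> stable \<rho> \<and> ori \<in> {1, -1} \<and> is_hat ori \<rho> \<rho>h"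
  then have "no_e56 \<rho>" using closed_alg_d_no_e56 by blast
  then show "CE_d alg_d \<rho>h \<in> lam_sub 4 U1234"
    using h d_into_U4_alg_d e1_in_U1234 by (intro d_hat_in_Lambda4[where ori = ori]) auto
qed

end
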